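(* Let $\varphi \in \mathcal{L}$. If there is a quasi-notional graded doxastic model (QNGDM) $M$ and a world $w$ of $M$ with $(M,w) \models \varphi$, then there exists a finite QNGDM $M'$ and a world $w'$ of $M'$ with $(M',w') \models \varphi$.
   Context: Fix a countably infinite set of atoms $\mathit{Atm}$ and a finite set of agents $\mathit{Agt}=\{1,\dots,n\}$; a group is a non-empty subset $J\subseteq \mathit{Agt}$, and $2^{\mathit{Agt}*}$ denotes the set of groups. $\mathbb{N}_0$ (resp. $\mathbb{N}_1$) are the naturals with (resp. without) $0$, and $\mathbb{N}_0^{\omega}=\mathbb{N}_0\cup\{\omega\}$, $\mathbb{N}_1^{\omega}=\mathbb{N}_1\cup\{\omega\}$ with $\omega$ an infinite element. A multiset over a set $X$ is a function $f:X\to\mathbb{N}_0^{\omega}$; its support is $\{x: f(x)>0\}$. A possibly infinite sum of grades equals the sum of its non-zero summands if there are finitely many of them and none is $\omega$, and equals $\omega$ otherwise. For $k\in\mathbb{N}_0$ and a group $J$, a partition of $k$ over $J$ is a function $\delta:J\to\mathbb{N}_0$ with $\sum_{i\in J}\delta(i)=k$; the set of these is $P(J,k)$. The language $\mathcal{L}_0$ is given by $\alpha ::= p \mid \neg\alpha \mid \alpha\wedge\alpha \mid \triangle_i^{k}\alpha$ with $p\in\mathit{Atm}$, $i\in\mathit{Agt}$, $k\in\mathbb{N}_1^{\omega}$ ("agent $i$ explicitly believes $\alpha$ with degree at least $k$"). The language $\mathcal{L}$ is given by $\varphi ::= \alpha \mid \neg\varphi\mid\varphi\wedge\varphi\mid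 \Box_J^{k}\varphi$ with $\alpha\in\mathcal{L}_0$, $J$ a group, $k\in\mathbb{N}_0$. A QNGDM is a tuple $M=(W,\mathcal{D},\rho,\mathcal{V})$ with $W$ a set of worlds, $\mathcal{D}:\mathit{Agt}\times W\to$ (multisets over $\mathcal{L}_0$), $\rho: 2^{\mathit{Agt}*}\times W\times W\to\mathbb{N}_0^{\omega}$, $\mathcal{V}:\mathit{Atm}\to 2^W$, with satisfaction: $(M,w)\models p$ iff $w\in\mathcal{V}(p)$; Boolean clauses as usual; $(M,w)\models\triangle_i^k\alpha$ iff $\mathcal{D}(i,w)(\alpha)\ge k$; $(M,w)\models\Box_J^k\varphi$ iff for all $u\in W$ with $\rho(J,w,u)\le k$, $(M,u)\models\varphi$; and such that for every group $J$ and $w,u\in W$ with $\rho(J,w,u)\neq\omega$: (i) $\rho(J,w,u)\ge \sum_{\alpha\in\mathcal{L}_0,\,(M,u)\not\models\alpha}\sum_{i\in J}\mathcal{D}(i,w)(\alpha)$; and (ii) there exists $\delta\in P(J,\rho(J,w,u))$ such that for every non-empty $J'\subset J$, $\sum_{i\in J'}\delta(i)\ge\rho(J',w,u)$. A QNGDM is finite if $W$ is finite and the support of $\mathcal{D}(i,w)$ is finite for every $i,w$. *)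

theory Defs
  imports Main "HOL-Library.Extended_Nat"
begin

typedef enat1 = "{k :: enat. 1 \<le> k}"
  by (rule exI[of _ 1]) simp

text \<open>Atoms are natural numbers (a countably infinite set); agents are the elements
  of a finite type 'agt; a group is a non-empty set of agents.\<close>
datatype 'agt fml0 =
    Atom nat
  | Neg0 "'agt fml0"
  | And0 "'agt fml0" "'agt fml0"
  | Tri 'agt enat1 "'agt fml0"

datatype 'agt fml =
    Base "'agt fml0"
  | Neg "'agt fml"
  | And "'agt fml" "'agt fml"
  | Box "'agt set" nat "'agt fml"

fun wf_fml :: "'agt fml \<Rightarrow> bool" where
  "wf_fml (Base a) = True"
| "wf_fml (Neg f) = wf_fml f"
| "wf_fml (And f g) = (wf_fml f \<and> wf_fml g)"
| "wf_fml (Box J k f) = (J \<noteq> {} \<and> wf_fml f)"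

text \<open>A model structure (W, D, rho, V); multisets over L0 are functions into enat.\<close>
record ('agt, 'w) model =
  W :: "'w set"
  D :: "'agt \<Rightarrow> 'w \<Rightarrow> 'agt fml0 \<Rightarrow> enat"
  rho :: "'agt set \<Rightarrow> 'w \<Rightarrow> 'w \<Rightarrow> enat"
  V :: "nat \<Rightarrow> 'w set"

fun sat0 :: "('agt, 'w) model \<Rightarrow> 'w \<Rightarrow> 'agt fml0 \<Rightarrow> bool" where
  "sat0 M w (Atom p) = (w \<in> V M p)"
| "sat0 M w (Neg0 a) = (\<not> sat0 M w a)"
| "sat0 M w (And0 a b) = (sat0 M w a \<and> sat0 M w b)"
| "sat0 M w (Tri i k a) = (D M i w a \<ge> Rep_enat1 k)"

fun sat :: "('agt, 'w) model \<Rightarrow> 'w \<Rightarrow> 'agt fml \<Rightarrow> bool" where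
  "sat M w (Base a) = sat0 M w a"
| "sat M w (Neg f) = (\<not> sat M w f)"
| "sat M w (And f g) = (sat M w f \<and> sat M w g)"
| "sat M w (Box J k f) = (\<forall>u \<in> W M. rho M J w u \<le> enat k \<longrightarrow> sat M u f)"

definition gsum :: "('x \<Rightarrow> enat) \<Rightarrow> 'x set \<Rightarrow> enat" where
  "gsum f A = (if finite {x \<in> A. f x \<noteq> 0} \<and> (\<forall>x \<in> A. f x \<noteq> \<infinity>)
               then sum f {x \<in> A. f x \<noteq> 0} else \<infinity>)"

definition partitions :: "'agt set \<Rightarrow> nat \<Rightarrow> ('agt \<Rightarrow> nat) set" where
  "partitions J k = {\<delta>. (\<Sum>i\<in>J. \<delta> i) = k}"

definition is_QNGDM :: "('agt, 'w) model \<Rightarrow> bool" where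
  "is_QNGDM M \<longleftrightarrow>
     (\<forall>p. V M p \<subseteq> W M) \<and>
     (\<forall>J w u. J \<noteq> {} \<and> w \<in> W M \<and> u \<in> W M \<and> rho M J w u \<noteq> \<infinity> \<longrightarrow>
        rho M J w u \<ge> gsum (\<lambda>a. \<Sum>i\<in>J. D M i w a) {a. \<not> sat0 M u a} \<and>
        (\<exists>\<delta> \<in> partitions J (the_enat (rho M J w u)).
           \<forall>J'. J' \<noteq> {} \<and> J' \<subset> J \<longrightarrow> enat (\<Sum>i\<in>J'. \<delta> i) \<ge> rho M J' w u))"

definition finite_QNGDM :: "('agt, 'w) model \<Rightarrow> bool" where
  "finite_QNGDM M \<longleftrightarrow> finite (W M) \<and> (\<forall>i. \<forall>w \<in> W M. finite {a. D M i w a > 0})"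

end

theory Submission
  imports Defs "HOL-Library.Countable_Set"
begin

text \<open>Unravel \<open>M\<close> from \<open>w\<close> into a tree of depth \<open>size \<phi>\<close>: a node is a list of subformulas of
  \<open>\<phi>\<close>, and the child \<open>f # p\<close> of \<open>p\<close> is labelled by a world witnessing the failure of \<open>f\<close>
  at the label of \<open>p\<close> whenever \<open>f\<close> is a box failing there. A node at depth \<open>d\<close> needs to
  agree with its label only on subformulas of size at most \<open>size \<phi> - d\<close>, and the box
  subformulas among these have their witnesses at depth \<open>d + 1\<close>. Giving finite grade
  \<open>\<rho>\<close> only along tree edges, copied from \<open>M\<close>, and keeping only the belief grades of
  \<open>\<L>\<^sub>0\<close>-subformulas of \<open>\<phi>\<close>, preserves both QNGDM conditions: (ii) is copied verbatim,
  and (i) because discarding beliefs only decreases the sum.\<close>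

fun subformulas0 :: "'agt fml0 \<Rightarrow> 'agt fml0 set" where
  "subformulas0 (Atom p) = {Atom p}"
| "subformulas0 (Neg0 a) = insert (Neg0 a) (subformulas0 a)"
| "subformulas0 (And0 a b) = insert (And0 a b) (subformulas0 a \<union> subformulas0 b)"
| "subformulas0 (Tri i k a) = insert (Tri i k a) (subformulas0 a)"

fun subformulas :: "'agt fml \<Rightarrow> 'agt fml set" where
  "subformulas (Base a) = {Base a}"
| "subformulas (Neg f) = insert (Neg f) (subformulas f)"
| "subformulas (And f g) = insert (And f g) (subformulas f \<union> subformulas g)"
| "subformulas (Box J k f) = insert (Box J k f) (subformulas f)"

fun base_subformulas :: "'agt fml \<Rightarrow> 'agt fml0 set" where
  "base_subformulas (Base a) = subformulas0 a"
| "base_subformulas (Neg f) = base_subformulas f"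
| "base_subformulas (And f g) = base_subformulas f \<union> base_subformulas g"
| "base_subformulas (Box J k f) = base_subformulas f"

lemma subformulas0_refl: "a \<in> subformulas0 a"
  by (cases a) auto

lemma subformulas0_trans: "b \<in> subformulas0 a \<Longrightarrow> subformulas0 b \<subseteq> subformulas0 a"
  by (induction a) auto

lemma finite_base_subformulas: "finite (base_subformulas f)"
proof -
  have "finite (subformulas0 a)" for a :: "'agt fml0"
    by (induction a) auto
  then show ?thesis
    by (induction f) auto
qed

lemma subformulas0_base_subformulas:
  "b \<in> base_subformulas f \<Longrightarrow> subformulas0 b \<subseteq> base_subformulas f"
  by (induction f) (auto dest: subformulas0_trans)

lemma finite_subformulas: "finite (subformulas f)"
  by (induction f) auto

lemma subformulas_refl: "f \<in> subformulas f"
  by (cases f) auto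

lemma subformulas_trans: "g \<in> subformulas f \<Longrightarrow> subformulas g \<subseteq> subformulas f"
  by (induction f) auto

lemma base_subformulas_Base: "Base a \<in> subformulas f \<Longrightarrow> subformulas0 a \<subseteq> base_subformulas f"
  by (induction f) auto

lemma sat0_cong:
  assumes "\<And>i b. b \<in> subformulas0 a \<Longrightarrow> D M' i u' b = D M i u b"
    and "\<And>q. u' \<in> V M' q \<longleftrightarrow> u \<in> V M q"
  shows "sat0 M' u' a = sat0 M u a"
  using assms(1)
proof (induction a)
  case (Tri i k a)
  then show ?case
    by (simp add: subformulas0_refl)
qed (use assms(2) in auto)

lemma gsum_mono:
  assumes "\<And>a. a \<in> A' \<Longrightarrow> f' a \<noteq> 0 \<Longrightarrow> a \<in> A \<and> f' a \<le> f a"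
  shows "gsum f' A' \<le> gsum f A"
proof (cases "finite {a \<in> A. f a \<noteq> 0} \<and> (\<forall>a \<in> A. f a \<noteq> \<infinity>)")
  case True
  let ?B = "{a \<in> A. f a \<noteq> 0}" and ?B' = "{a \<in> A'. f' a \<noteq> 0}"
  have "?B' \<subseteq> ?B"
    using assms by fastforce
  then have "finite ?B'"
    using True finite_subset by blast
  moreover have "\<forall>a \<in> A'. f' a \<noteq> \<infinity>"
    using assms True by (metis enat_ord_simps(5) i0_ne_infinity)
  moreover have "sum f' ?B' \<le> sum f ?B'"
    using assms by (intro sum_mono) auto
  moreover have "sum f ?B' \<le> sum f ?B"
    using True \<open>?B' \<subseteq> ?B\<close> by (intro sum_mono2) auto
  ultimately show ?thesis
    using True by (simp add: gsum_def)
next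
  case False
  then have "gsum f A = \<infinity>"
    by (simp only: gsum_def if_False)
  then show ?thesis
    by simp
qed

definition copy_model ::
    "('agt, 'w) model \<Rightarrow> 'p set \<Rightarrow> ('p \<Rightarrow> 'p \<Rightarrow> bool) \<Rightarrow> ('p \<Rightarrow> 'w) \<Rightarrow> 'agt fml0 set
      \<Rightarrow> ('agt, nat) model" where
  "copy_model M P E L S = (let node = from_nat_into P in
     \<lparr>W = to_nat_on P ` P,
      D = \<lambda>i n a. if a \<in> S then D M i (L (node n)) a else 0,
      rho = \<lambda>J m n. if E (node m) (node n) then rho M J (L (node m)) (L (node n)) else \<infinity>,
      V = \<lambda>q. {n \<in> to_nat_on P ` P. L (node n) \<in> V M q}\<rparr>)"

lemma W_copy_model: "W (copy_model M P E L S) = to_nat_on P ` P"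
  by (simp add: copy_model_def Let_def)

context
  fixes M :: "('agt, 'w) model" and P :: "'p set" and E :: "'p \<Rightarrow> 'p \<Rightarrow> bool"
    and L :: "'p \<Rightarrow> 'w" and S :: "'agt fml0 set"
  assumes countable_nodes: "countable P"
begin

lemma copy_model_simps:
  assumes "p \<in> P" and "q \<in> P"
  shows "D (copy_model M P E L S) i (to_nat_on P p) a = (if a \<in> S then D M i (L p) a else 0)"
    and "rho (copy_model M P E L S) J (to_nat_on P p) (to_nat_on P q)
           = (if E p q then rho M J (L p) (L q) else \<infinity>)"
    and "to_nat_on P p \<in> V (copy_model M P E L S) v \<longleftrightarrow> L p \<in> V M v"
  using assms countable_nodes by (auto simp: copy_model_def Let_def)

lemma sat0_copy_model:
  assumes "p \<in> P" and "subformulas0 a \<subseteq> S"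
  shows "sat0 (copy_model M P E L S) (to_nat_on P p) a = sat0 M (L p) a"
  using assms by (intro sat0_cong) (auto simp: copy_model_simps)

lemma is_QNGDM_copy_model:
  assumes "is_QNGDM M" and "L ` P \<subseteq> W M" and "\<And>a. a \<in> S \<Longrightarrow> subformulas0 a \<subseteq> S"
  shows "is_QNGDM (copy_model M P E L S)"
  unfolding is_QNGDM_def
proof (intro conjI allI impI)
  let ?M' = "copy_model M P E L S"
  show "V ?M' v \<subseteq> W ?M'" for v
    by (auto simp: copy_model_def Let_def)
  fix J m n
  assume edge: "J \<noteq> {} \<and> m \<in> W ?M' \<and> n \<in> W ?M' \<and> rho ?M' J m n \<noteq> \<infinity>"
  then obtain p q where pq: "p \<in> P" "q \<in> P" "m = to_nat_on P p" "n = to_nat_on P q"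
    by (auto simp: W_copy_model)
  with edge have "E p q"
    by (auto simp: copy_model_simps split: if_splits)
  with pq have rho_copy: "rho ?M' J' m n = rho M J' (L p) (L q)" for J'
    by (simp add: copy_model_simps)
  have "L p \<in> W M" and "L q \<in> W M" and "rho M J (L p) (L q) \<noteq> \<infinity>"
    using assms(2) pq edge rho_copy by auto
  with assms(1) edge have
    "rho M J (L p) (L q) \<ge> gsum (\<lambda>a. \<Sum>i\<in>J. D M i (L p) a) {a. \<not> sat0 M (L q) a} \<and>
      (\<exists>\<delta> \<in> partitions J (the_enat (rho M J (L p) (L q))).
         \<forall>J'. J' \<noteq> {} \<and> J' \<subset> J \<longrightarrow> enat (\<Sum>i\<in>J'. \<delta> i) \<ge> rho M J' (L p) (L q))"
    unfolding is_QNGDM_def by blast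
  moreover have "gsum (\<lambda>a. \<Sum>i\<in>J. D ?M' i m a) {a. \<not> sat0 ?M' n a}
      \<le> gsum (\<lambda>a. \<Sum>i\<in>J. D M i (L p) a) {a. \<not> sat0 M (L q) a}"
  proof (rule gsum_mono)
    fix a
    assume "a \<in> {a. \<not> sat0 ?M' n a}" and "(\<Sum>i\<in>J. D ?M' i m a) \<noteq> 0"
    moreover from this have "a \<in> S"
      using pq by (cases "a \<in> S") (simp_all add: copy_model_simps)
    ultimately show "a \<in> {a. \<not> sat0 M (L q) a} \<and>
        (\<Sum>i\<in>J. D ?M' i m a) \<le> (\<Sum>i\<in>J. D M i (L p) a)"
      using pq assms(3) by (simp add: copy_model_simps sat0_copy_model)
  qed
  ultimately show "rho ?M' J m n \<ge> gsum (\<lambda>a. \<Sum>i\<in>J. D ?M' i m a) {a. \<not> sat0 ?M' n a}"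
    and "\<exists>\<delta> \<in> partitions J (the_enat (rho ?M' J m n)).
           \<forall>J'. J' \<noteq> {} \<and> J' \<subset> J \<longrightarrow> enat (\<Sum>i\<in>J'. \<delta> i) \<ge> rho ?M' J' m n"
    by (auto simp: rho_copy intro: order_trans)
qed

lemma finite_QNGDM_copy_model:
  assumes "finite P" and "finite S"
  shows "finite_QNGDM (copy_model M P E L S)"
proof -
  have "{a. D (copy_model M P E L S) i n a > 0} \<subseteq> S" for i n
    by (auto simp: copy_model_def Let_def split: if_splits)
  then show ?thesis
    using assms unfolding finite_QNGDM_def by (auto simp: W_copy_model intro: finite_subset)
qed

lemma sat_copy_model:
  fixes \<phi> :: "'agt fml" and depth :: "'p \<Rightarrow> nat" and N :: nat
  assumes labels: "L ` P \<subseteq> W M"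
    and base: "base_subformulas \<phi> \<subseteq> S"
    and depth_edge: "\<And>p q. E p q \<Longrightarrow> depth q \<le> Suc (depth p)"
    and witnesses: "\<And>p J k g. p \<in> P \<Longrightarrow> Box J k g \<in> subformulas \<phi> \<Longrightarrow>
          depth p + size (Box J k g) \<le> N \<Longrightarrow> \<not> sat M (L p) (Box J k g) \<Longrightarrow>
          \<exists>q \<in> P. E p q \<and> rho M J (L p) (L q) \<le> enat k \<and> \<not> sat M (L q) g"
  shows "f \<in> subformulas \<phi> \<Longrightarrow> p \<in> P \<Longrightarrow> depth p + size f \<le> N \<Longrightarrow>
    sat (copy_model M P E L S) (to_nat_on P p) f = sat M (L p) f"
proof (induction f arbitrary: p)
  case (Base a)
  then have "subformulas0 a \<subseteq> S"
    using base base_subformulas_Base by blast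
  with Base.prems(2) show ?case
    by (simp add: sat0_copy_model)
next
  case (Neg f)
  then show ?case
    using subformulas_trans subformulas_refl by fastforce
next
  case (And f g)
  then show ?case
    using subformulas_trans subformulas_refl by fastforce
next
  case (Box J k g)
  let ?M' = "copy_model M P E L S"
  have IH: "sat ?M' (to_nat_on P q) g = sat M (L q) g" if "q \<in> P" and "E p q" for q
    using Box subformulas_trans subformulas_refl that depth_edge[OF \<open>E p q\<close>] by fastforce
  show ?case
  proof
    assume sat_copy: "sat ?M' (to_nat_on P p) (Box J k g)"
    show "sat M (L p) (Box J k g)"
    proof (rule ccontr)
      assume "\<not> sat M (L p) (Box J k g)"
      with Box.prems witnesses obtain q where
        "q \<in> P" "E p q" "rho M J (L p) (L q) \<le> enat k" "\<not> sat M (L q) g"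
        by blast
      with sat_copy IH Box.prems(2) show False
        by (auto simp: W_copy_model copy_model_simps)
    qed
  next
    assume sat_M: "sat M (L p) (Box J k g)"
    show "sat ?M' (to_nat_on P p) (Box J k g)"
    proof (simp, intro ballI impI)
      fix n
      assume "n \<in> W ?M'" and rho_n: "rho ?M' J (to_nat_on P p) n \<le> enat k"
      then obtain q where q: "q \<in> P" "n = to_nat_on P q"
        by (auto simp: W_copy_model)
      with rho_n Box.prems(2) have "E p q" and "rho M J (L p) (L q) \<le> enat k"
        by (auto simp: copy_model_simps split: if_splits)
      with sat_M q labels IH show "sat ?M' n g"
        by auto
    qed
  qed
qed

end

definition box_witness :: "('agt, 'w) model \<Rightarrow> 'agt fml \<Rightarrow> 'w \<Rightarrow> 'w" where
  "box_witness M f u = (case f of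
      Box J k g \<Rightarrow>
        if sat M u (Box J k g) then u
        else SOME v. v \<in> W M \<and> rho M J u v \<le> enat k \<and> \<not> sat M v g
    | _ \<Rightarrow> u)"

lemma box_witness_Box:
  assumes "\<not> sat M u (Box J k g)"
  shows "box_witness M (Box J k g) u \<in> W M \<and> rho M J u (box_witness M (Box J k g) u) \<le> enat k
    \<and> \<not> sat M (box_witness M (Box J k g) u) g"
proof -
  let ?v = "SOME v. v \<in> W M \<and> rho M J u v \<le> enat k \<and> \<not> sat M v g"
  from assms have "\<exists>v. v \<in> W M \<and> rho M J u v \<le> enat k \<and> \<not> sat M v g"
    by auto
  then have "?v \<in> W M \<and> rho M J u ?v \<le> enat k \<and> \<not> sat M ?v g"
    by (rule someI_ex)
  moreover have "box_witness M (Box J k g) u = ?v"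
    using assms by (simp only: box_witness_def fml.case if_False)
  ultimately show ?thesis
    by simp
qed

lemma box_witness_in_W:
  assumes "u \<in> W M"
  shows "box_witness M f u \<in> W M"
proof (cases "\<exists>J k g. f = Box J k g \<and> \<not> sat M u f")
  case True
  then show ?thesis
    using box_witness_Box by metis
next
  case False
  then have "box_witness M f u = u"
    by (cases f) (auto simp: box_witness_def)
  with assms show ?thesis
    by simp
qed

lemma foldr_box_witness_in_W: "w \<in> W M \<Longrightarrow> foldr (box_witness M) p w \<in> W M"
  by (induction p) (simp_all add: box_witness_in_W)

theorem lemma1:
  fixes \<phi> :: "('agt::finite) fml" and M :: "('agt, 'w) model" and w :: 'w
  assumes "wf_fml \<phi>" and "is_QNGDM M" and "w \<in> W M" and "sat M w \<phi>"
  shows "\<exists>M' :: ('agt, nat) model. is_QNGDM M' \<and> finite_QNGDM M' \<and>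
           (\<exists>w' \<in> W M'. sat M' w' \<phi>)"
proof -
  define P where "P = {p. set p \<subseteq> subformulas \<phi> \<and> length p \<le> size \<phi>}"
  define L where "L p = foldr (box_witness M) p w" for p
  define E where "E p q \<longleftrightarrow> (\<exists>f. q = f # p)" for p q :: "'agt fml list"
  let ?M' = "copy_model M P E L (base_subformulas \<phi>)"
  have "finite P"
    using finite_lists_length_le[OF finite_subformulas] by (simp add: P_def)
  then have "countable P"
    by (rule countable_finite)
  have labels: "L ` P \<subseteq> W M"
    using assms(3) by (auto simp: L_def foldr_box_witness_in_W)
  have witnesses: "\<exists>q \<in> P. E p q \<and> rho M J (L p) (L q) \<le> enat k \<and> \<not> sat M (L q) g"
    if "p \<in> P" "Box J k g \<in> subformulas \<phi>" "length p + size (Box J k g) \<le> size \<phi>"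
      and "\<not> sat M (L p) (Box J k g)" for p J k g
    using that box_witness_Box[of M "L p" J k g]
    by (intro bexI[of _ "Box J k g # p"]) (auto simp: P_def E_def L_def)
  have "sat ?M' (to_nat_on P []) \<phi> = sat M (L []) \<phi>"
    by (rule sat_copy_model[OF \<open>countable P\<close> labels _ _ witnesses
          subformulas_refl]) (auto simp: P_def E_def)
  moreover have "to_nat_on P [] \<in> W ?M'"
    by (simp add: W_copy_model P_def)
  moreover have "is_QNGDM ?M'"
    using is_QNGDM_copy_model[OF \<open>countable P\<close> assms(2) labels]
      subformulas0_base_subformulas by blast
  moreover have "finite_QNGDM ?M'"
    by (rule finite_QNGDM_copy_model)
      (simp_all add: \<open>countable P\<close> \<open>finite P\<close> finite_base_subformulas)
  ultimately show ?thesis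
    using assms(4) by (auto simp: L_def)
qed

end
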